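(* Let $c_1,c_2,c_3\in\mathbb{C}$ with $|c_i|>1$, let $r_i=\sqrt{|c_i|^2-1}$, and let $L_i=\{z\in\mathbb{D}:|z-c_i|=r_i\}$, where $\mathbb{D}=\{z\in\mathbb{C}:|z|<1\}$. Assume that $L_1,L_2,L_3$ together with the point $z_0=0$ satisfy the configuration condition in the context. Define $\tau_i\colon S^1\to S^1$ by $\tau_i(z)=\dfrac{r_i^2}{\bar z-\bar c_i}+c_i$ if $|z-c_i|>r_i$ and $\tau_i(z)=z$ otherwise. Then there exists a real constant $C<1$, depending only on $L_1,L_2,L_3$, such that for all $x,y\in S^1$ there exists $i\in\{1,2,3\}$ with $|\tau_i(x)-\tau_i(y)|<C|x-y|$.
   Context: $\mathbb{D}$ is the Poincaré disk model of the hyperbolic plane with boundary $S^1=\{|z|=1\}$; hyperbolic lines not through $0$ are the arcs $\{z\in\mathbb{D}:|z-c|^2=|c|^2-1\}$ with $|c|>1$, and lines through $0$ are diameters. Configuration condition: for all distinct $i,i'\in\{1,2,3\}$, either (a) $L_i\cap L_{i'}=\emptyset$ and $z_0$ lies in the connected component of $\mathbb{D}\setminus(L_i\cup L_{i'})$ whose boundary contains both lines, or (b) $L_i,L_{i'}$ meet at an angle of measure $\pi/m$ for some integer $m\ge2$, and $z_0$ lies in the interior of that angle. *)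

theory Defs
  imports "HOL-Analysis.Analysis"
begin

definition unit_disk :: "complex set" where
  "unit_disk = ball 0 1"

definition hrad :: "complex \<Rightarrow> real" where
  "hrad c = sqrt ((cmod c)\<^sup>2 - 1)"

definition hline :: "complex \<Rightarrow> complex set" where
  "hline c = {z \<in> unit_disk. cmod (z - c) = hrad c}"

definition vec_angle :: "complex \<Rightarrow> complex \<Rightarrow> real" where
  "vec_angle u v = arccos (Re (u * cnj v) / (cmod u * cmod v))"

text \<open>Side indicator: +1 if z lies outside the circle |w - c| = hrad c, -1 otherwise.
  The outward normal at a point p of that circle, pointing towards the side of z,
  is side c z * (p - c).\<close>

definition side :: "complex \<Rightarrow> complex \<Rightarrow> real" where
  "side c z = (if cmod (z - c) > hrad c then 1 else -1)"

text \<open>Measure of the angle at a common point p of the lines with centres c and c'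
  of the angular sector (component of the disk minus both lines) containing z0:
  it is pi minus the angle between the normals pointing into the sector.\<close>

definition sector_angle :: "complex \<Rightarrow> complex \<Rightarrow> complex \<Rightarrow> complex \<Rightarrow> real" where
  "sector_angle c c' p z0 =
     pi - vec_angle (of_real (side c z0) * (p - c)) (of_real (side c' z0) * (p - c'))"

definition pair_condition :: "complex \<Rightarrow> complex \<Rightarrow> complex \<Rightarrow> bool" where
  "pair_condition c c' z0 \<longleftrightarrow>
     (hline c \<inter> hline c' = {} \<and> z0 \<in> unit_disk - (hline c \<union> hline c') \<and>
        hline c \<union> hline c' \<subseteq>
          frontier (connected_component_set (unit_disk - (hline c \<union> hline c')) z0))
   \<or> (\<exists>p m. p \<in> hline c \<inter> hline c' \<and> (m::nat) \<ge> 2 \<and>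
        z0 \<in> unit_disk - (hline c \<union> hline c') \<and>
        sector_angle c c' p z0 = pi / real m)"

definition config_condition :: "(nat \<Rightarrow> complex) \<Rightarrow> complex \<Rightarrow> bool" where
  "config_condition c z0 \<longleftrightarrow>
     (\<forall>i\<in>{1,2,3}. \<forall>i'\<in>{1,2,3::nat}. i \<noteq> i' \<longrightarrow> pair_condition (c i) (c i') z0)"

definition tau :: "complex \<Rightarrow> complex \<Rightarrow> complex" where
  "tau c z = (if cmod (z - c) > hrad c
              then of_real ((hrad c)\<^sup>2) / (cnj z - cnj c) + c else z)"

end

theory Submission
  imports Defs
begin

text \<open>On the unit circle, \<open>tau c\<close> is the identity inside the disc bounded by \<open>hline c\<close> and
  the inversion in that circle outside it; at a point \<open>x\<close> outside, it contracts distances by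
  the factor \<open>hrad c / \<bar>x - c\<bar> < 1\<close>. It therefore suffices that every point of the circle
  lies strictly outside one of the three discs; compactness of the circle then makes the
  factor uniform. The configuration condition at \<open>0\<close> forces \<open>Re (c i * cnj (c j)) \<le> 1\<close>
  for \<open>i \<noteq> j\<close> (the lines are disjoint with each outside the other's disc, or they meet
  at an angle of at most \<open>pi / 2\<close> as seen from \<open>0\<close>). Three such centres cannot have a
  point of the circle in all their closed discs: after rotating that point to \<open>1\<close>, two
  centres lie in the same closed half-plane bounded by the real axis, and then the real
  part of their Hermitian product exceeds \<open>1\<close>.\<close>

lemma hrad_pos: "1 < cmod c \<Longrightarrow> 0 < hrad c"
  unfolding hrad_def by (simp add: abs_square_less_1)

lemma hrad_less_norm: "1 < cmod c \<Longrightarrow> hrad c < cmod c"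
  unfolding hrad_def by (simp add: real_sqrt_less_iff real_less_lsqrt)

lemma power2_hrad: "1 < cmod c \<Longrightarrow> (hrad c)\<^sup>2 = (cmod c)\<^sup>2 - 1"
  unfolding hrad_def by (simp add: power_mono_iff)

lemma power2_norm_diff_minus_hrad:
  assumes "1 < cmod c"
  shows "(cmod (z - c))\<^sup>2 - (hrad c)\<^sup>2 = (cmod z)\<^sup>2 + 1 - 2 * Re (z * cnj c)"
  unfolding power2_hrad[OF assms] cmod_power2 by (simp add: power2_eq_square algebra_simps)

lemma norm_diff_eq_hrad_iff:
  assumes "1 < cmod c"
  shows "cmod (z - c) = hrad c \<longleftrightarrow> (cmod z)\<^sup>2 + 1 = 2 * Re (z * cnj c)"
proof -
  have "cmod (z - c) = hrad c \<longleftrightarrow> (cmod (z - c))\<^sup>2 = (hrad c)\<^sup>2"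
    using hrad_pos[OF assms] by simp
  then show ?thesis using power2_norm_diff_minus_hrad[OF assms, of z] by linarith
qed

lemma norm_diff_le_hrad_iff:
  assumes "1 < cmod c"
  shows "cmod (z - c) \<le> hrad c \<longleftrightarrow> (cmod z)\<^sup>2 + 1 \<le> 2 * Re (z * cnj c)"
proof -
  have "cmod (z - c) \<le> hrad c \<longleftrightarrow> (cmod (z - c))\<^sup>2 \<le> (hrad c)\<^sup>2"
    using hrad_pos[OF assms] by simp
  then show ?thesis using power2_norm_diff_minus_hrad[OF assms, of z] by linarith
qed

lemma norm_diff_less_hrad_iff:
  assumes "1 < cmod c"
  shows "cmod (z - c) < hrad c \<longleftrightarrow> (cmod z)\<^sup>2 + 1 < 2 * Re (z * cnj c)"
  using norm_diff_eq_hrad_iff[OF assms, of z] norm_diff_le_hrad_iff[OF assms, of z]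
  by (auto simp: less_le)

lemma hrad_less_norm_diff_iff:
  assumes "1 < cmod c"
  shows "hrad c < cmod (z - c) \<longleftrightarrow> 2 * Re (z * cnj c) < (cmod z)\<^sup>2 + 1"
  using norm_diff_le_hrad_iff[OF assms, of z] by (meson not_le)

lemma of_real_div_cnj: "of_real (r\<^sup>2) / cnj u = of_real ((r / cmod u)\<^sup>2) * u"
proof (cases "u = 0")
  case False
  then have "cnj u = of_real ((cmod u)\<^sup>2) / u"
    by (metis complex_norm_square nonzero_mult_div_cancel_left)
  with False show ?thesis by (simp add: power_divide)
qed simp

text \<open>With \<open>k = (r / \<bar>u\<bar>)\<^sup>2\<close> one has
  \<open>k \<bar>u - v\<bar>\<^sup>2 - \<bar>k u - v\<bar>\<^sup>2 = (1 - k) (r\<^sup>2 - \<bar>v\<bar>\<^sup>2)\<close>.\<close>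

lemma norm_inversion_minus_le:
  fixes u v :: complex
  assumes r: "0 < r" and u: "r < cmod u" and v: "cmod v \<le> r"
  shows "cmod (of_real (r\<^sup>2) / cnj u - v) \<le> r / cmod u * cmod (u - v)"
proof -
  define k where "k = (r / cmod u)\<^sup>2"
  have "0 < cmod u"
    using r u by linarith
  then have ku: "k * (cmod u)\<^sup>2 = r\<^sup>2"
    by (simp add: k_def power_divide)
  have k1: "k \<le> 1"
    using r u by (simp add: k_def power_le_one_iff divide_le_eq_1)
  have "k * (cmod (u - v))\<^sup>2 - (cmod (of_real k * u - v))\<^sup>2 = (1 - k) * (r\<^sup>2 - (cmod v)\<^sup>2)"
    unfolding ku[symmetric] cmod_power2 by (simp add: power2_eq_square algebra_simps)
  moreover have "(cmod v)\<^sup>2 \<le> r\<^sup>2"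
    using v by (simp add: power_mono)
  ultimately have "(cmod (of_real k * u - v))\<^sup>2 \<le> (r / cmod u * cmod (u - v))\<^sup>2"
    using k1 unfolding power_mult_distrib k_def[symmetric] by (smt (verit) mult_nonneg_nonneg)
  then have "cmod (of_real k * u - v) \<le> r / cmod u * cmod (u - v)"
    using r by (auto intro: power2_le_imp_le)
  then show ?thesis
    unfolding of_real_div_cnj k_def .
qed

lemma norm_inversion_diff_le:
  fixes u v :: complex
  assumes r: "0 < r" and u: "r < cmod u" and v: "r < cmod v"
  shows "cmod (of_real (r\<^sup>2) / cnj u - of_real (r\<^sup>2) / cnj v) \<le> r / cmod u * cmod (u - v)"
proof -
  have "u \<noteq> 0" "v \<noteq> 0"
    using r u v by auto
  then have "of_real (r\<^sup>2) / cnj u - of_real (r\<^sup>2) / cnj v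
               = of_real (r\<^sup>2) * cnj (v - u) / (cnj u * cnj v)"
    by (simp add: field_simps)
  then have "cmod (of_real (r\<^sup>2) / cnj u - of_real (r\<^sup>2) / cnj v)
               = r / cmod u * (r / cmod v) * cmod (u - v)"
    by (simp add: norm_mult norm_divide power2_eq_square norm_minus_commute flip: complex_cnj_diff)
  also have "\<dots> \<le> r / cmod u * 1 * cmod (u - v)"
    using r u v by (intro mult_right_mono mult_left_mono) (auto simp: divide_le_eq_1)
  finally show ?thesis
    by simp
qed

lemma norm_tau_diff_le:
  assumes c: "1 < cmod c" and x: "hrad c < cmod (x - c)"
  shows "cmod (tau c x - tau c y) \<le> hrad c / cmod (x - c) * cmod (x - y)"
proof (cases "hrad c < cmod (y - c)")
  case True
  then have "tau c x - tau c y
               = of_real ((hrad c)\<^sup>2) / cnj (x - c) - of_real ((hrad c)\<^sup>2) / cnj (y - c)"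
    using x by (simp add: tau_def)
  then show ?thesis
    using norm_inversion_diff_le[OF hrad_pos[OF c] x True] by (simp add: norm_minus_commute)
next
  case False
  then have "tau c x - tau c y = of_real ((hrad c)\<^sup>2) / cnj (x - c) - (y - c)"
    using x by (simp add: tau_def)
  then show ?thesis
    using norm_inversion_minus_le[OF hrad_pos[OF c] x, of "y - c"] False by simp
qed

text \<open>The map from the Beltrami--Klein model to the Poincare model. It carries the chord
  \<open>{k. Re (k * cnj c) = 1}\<close> onto \<open>hline c\<close>, and the side \<open>Re (k * cnj c) > 1\<close>
  of it into the disc bounded by \<open>hline c\<close>.\<close>

definition klein_to_poincare :: "complex \<Rightarrow> complex" where
  "klein_to_poincare k = k / of_real (1 + sqrt (1 - (cmod k)\<^sup>2))"

lemma norm_klein_to_poincare_less: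
  assumes "cmod k < 1"
  shows "cmod (klein_to_poincare k) < 1"
proof -
  define w where "w = sqrt (1 - (cmod k)\<^sup>2)"
  have "0 \<le> w"
    using assms by (simp add: w_def abs_square_le_1)
  then have "cmod (klein_to_poincare k) \<le> cmod k / 1"
    unfolding klein_to_poincare_def w_def[symmetric] norm_divide norm_of_real
    by (intro divide_left_mono) auto
  with assms show ?thesis
    by linarith
qed

lemma klein_to_poincare_circle_power:
  assumes "cmod k < 1"
  shows "(cmod (klein_to_poincare k))\<^sup>2 + 1 - 2 * Re (klein_to_poincare k * cnj c)
           = 2 / (1 + sqrt (1 - (cmod k)\<^sup>2)) * (1 - Re (k * cnj c))"
proof -
  define w where "w = sqrt (1 - (cmod k)\<^sup>2)"
  have w: "0 \<le> w" "w\<^sup>2 = 1 - (cmod k)\<^sup>2"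
    using assms by (simp_all add: w_def abs_square_le_1)
  then have "(cmod k)\<^sup>2 = (1 - w) * (1 + w)"
    by (simp add: algebra_simps power2_eq_square)
  then have "(cmod (klein_to_poincare k))\<^sup>2 = (1 - w) / (1 + w)"
    using w unfolding klein_to_poincare_def w_def[symmetric] norm_divide norm_of_real
    by (simp add: power_divide power2_eq_square)
  moreover have "Re (klein_to_poincare k * cnj c) = Re (k * cnj c) / (1 + w)"
    unfolding klein_to_poincare_def w_def[symmetric] by (simp add: Re_divide_of_real)
  ultimately show ?thesis
    using w unfolding w_def[symmetric] by (simp add: field_simps)
qed

lemma klein_to_poincare_in_hline:
  assumes c: "1 < cmod c" and k: "cmod k < 1" and "Re (k * cnj c) = 1"
  shows "klein_to_poincare k \<in> hline c"
proof -
  have "2 / (1 + sqrt (1 - (cmod k)\<^sup>2)) * (1 - Re (k * cnj c)) = 0"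
    using assms(3) by simp
  then have "(cmod (klein_to_poincare k))\<^sup>2 + 1 = 2 * Re (klein_to_poincare k * cnj c)"
    using klein_to_poincare_circle_power[OF k, of c] by linarith
  then show ?thesis
    unfolding hline_def unit_disk_def
    using norm_diff_eq_hrad_iff[OF c] norm_klein_to_poincare_less[OF k] by simp
qed

lemma norm_klein_to_poincare_diff_less_hrad:
  assumes c: "1 < cmod c" and k: "cmod k < 1" and "1 < Re (k * cnj c)"
  shows "cmod (klein_to_poincare k - c) < hrad c"
proof -
  have "0 < 2 / (1 + sqrt (1 - (cmod k)\<^sup>2))"
    using k by (simp add: add_pos_nonneg abs_square_le_1)
  then have "2 / (1 + sqrt (1 - (cmod k)\<^sup>2)) * (1 - Re (k * cnj c)) < 0"
    by (rule mult_pos_neg) (use assms(3) in linarith)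
  then have "(cmod (klein_to_poincare k))\<^sup>2 + 1 < 2 * Re (klein_to_poincare k * cnj c)"
    using klein_to_poincare_circle_power[OF k, of c] by linarith
  then show ?thesis
    using norm_diff_less_hrad_iff[OF c] by simp
qed

text \<open>The chord \<open>{k. Re (k * cnj c) = 1}\<close> of the Klein model, parametrized from its midpoint
  \<open>c / \<bar>c\<bar>\<^sup>2\<close>.\<close>

definition klein_chord :: "complex \<Rightarrow> real \<Rightarrow> complex" where
  "klein_chord c t = c * (1 + \<i> * of_real t) / of_real ((cmod c)\<^sup>2)"

lemma Re_klein_chord_mult_cnj:
  "Re (klein_chord c t * cnj w) = (Re (c * cnj w) - t * Im (c * cnj w)) / (cmod c)\<^sup>2"
  unfolding klein_chord_def by (simp add: algebra_simps)

lemma norm_klein_chord_less: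
  assumes c: "1 < cmod c" and t: "\<bar>t\<bar> < hrad c"
  shows "cmod (klein_chord c t) < 1"
proof -
  have "t\<^sup>2 < (cmod c)\<^sup>2 - 1"
    using t hrad_pos[OF c] power2_hrad[OF c]
    by (metis abs_ge_zero power2_abs power_strict_mono zero_less_numeral)
  moreover have "(cmod (1 + \<i> * of_real t))\<^sup>2 = 1 + t\<^sup>2"
    by (simp add: cmod_power2)
  then have "(cmod (klein_chord c t))\<^sup>2 = (1 + t\<^sup>2) / (cmod c)\<^sup>2"
    unfolding klein_chord_def norm_divide norm_mult norm_of_real
    using c by (simp add: power_divide power_mult_distrib power2_eq_square)
  ultimately have "(cmod (klein_chord c t))\<^sup>2 < 1"
    using c by (simp add: divide_less_eq)
  then show ?thesis
    by (simp add: abs_square_less_1)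
qed

lemma Re_klein_chord_mult_cnj_self:
  assumes "c \<noteq> 0"
  shows "Re (klein_chord c t * cnj c) = 1"
proof -
  have "Re (c * cnj c) = (cmod c)\<^sup>2" "Im (c * cnj c) = 0"
    by (simp_all add: complex_mult_cnj cmod_power2)
  with assms show ?thesis
    unfolding Re_klein_chord_mult_cnj by simp
qed

lemma klein_to_poincare_klein_chord_in_hline:
  assumes c: "1 < cmod c" and t: "\<bar>t\<bar> < hrad c"
  shows "klein_to_poincare (klein_chord c t) \<in> hline c"
  using c t by (intro klein_to_poincare_in_hline norm_klein_chord_less Re_klein_chord_mult_cnj_self) auto

text \<open>If \<open>hline c'\<close> avoids the open disc bounded by \<open>hline c\<close>, then no point of the Klein chord
  of \<open>c'\<close> lies beyond the Klein chord of \<open>c\<close>; the extreme points \<open>t \<rightarrow> \<plusminus>hrad c'\<close> give the bound.\<close>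

lemma hline_outside_disc_bound:
  assumes c: "1 < cmod c" and c': "1 < cmod c'"
    and outside: "\<forall>z\<in>hline c'. hrad c \<le> cmod (z - c)"
  shows "hrad c' * \<bar>Im (c' * cnj c)\<bar> \<le> (cmod c')\<^sup>2 - Re (c' * cnj c)"
proof (rule field_le_mult_one_interval)
  fix h :: real
  assume h: "0 < h" "h < 1"
  define q where "q = Im (c' * cnj c)"
  define t where "t = - sgn q * hrad c' * h"
  have "\<bar>t\<bar> \<le> hrad c' * h"
    using hrad_pos[OF c'] h by (simp add: t_def abs_mult abs_sgn_eq)
  also have "\<dots> < hrad c'"
    using hrad_pos[OF c'] h by simp
  finally have t: "\<bar>t\<bar> < hrad c'" .
  have "\<not> cmod (klein_to_poincare (klein_chord c' t) - c) < hrad c"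
    using outside klein_to_poincare_klein_chord_in_hline[OF c' t] by fastforce
  then have "\<not> 1 < Re (klein_chord c' t * cnj c)"
    using norm_klein_to_poincare_diff_less_hrad[OF c norm_klein_chord_less[OF c' t]] by blast
  moreover have "0 < (cmod c')\<^sup>2"
    using c' by auto
  ultimately have "Re (c' * cnj c) - t * q \<le> (cmod c')\<^sup>2"
    unfolding Re_klein_chord_mult_cnj q_def by (simp add: not_less divide_le_eq)
  moreover have "- t * q = h * (hrad c' * \<bar>q\<bar>)"
    by (simp add: t_def abs_sgn algebra_simps)
  ultimately show "h * (hrad c' * \<bar>Im (c' * cnj c)\<bar>) \<le> (cmod c')\<^sup>2 - Re (c' * cnj c)"
    unfolding q_def by linarith
qed

lemma gram_bounds_imp_eq:
  fixes A B s q :: real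
  assumes A: "1 < A" and B: "1 < B" and s: "1 < s" and q: "q\<^sup>2 = A * B - s\<^sup>2"
    and bound_B: "sqrt (B - 1) * \<bar>q\<bar> \<le> B - s" and bound_A: "sqrt (A - 1) * \<bar>q\<bar> \<le> A - s"
  shows "s = B"
proof -
  have nonneg: "0 \<le> sqrt (B - 1) * \<bar>q\<bar>" "0 \<le> sqrt (A - 1) * \<bar>q\<bar>"
    using A B by (auto intro!: mult_nonneg_nonneg)
  then have "0 \<le> B - s" "0 \<le> A - s"
    using bound_B bound_A by linarith+
  have "(sqrt (B - 1) * \<bar>q\<bar>)\<^sup>2 \<le> (B - s)\<^sup>2"
    using bound_B nonneg by (intro power_mono) auto
  then have "(B - 1) * (A * B - s\<^sup>2) \<le> (B - s)\<^sup>2"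
    using B by (simp add: power_mult_distrib q)
  then have "B * ((A - 1) * (B - 1)) \<le> B * (s - 1)\<^sup>2"
    by (simp add: algebra_simps power2_eq_square)
  then have "(A - 1) * (B - 1) \<le> (s - 1) * (s - 1)"
    using B by (simp add: power2_eq_square)
  also have "\<dots> \<le> (A - 1) * (s - 1)"
    using \<open>0 \<le> A - s\<close> s by (intro mult_right_mono) auto
  finally have "B \<le> s"
    using A by simp
  with \<open>0 \<le> B - s\<close> show ?thesis
    by linarith
qed

text \<open>Applied in both directions, \<open>hline_outside_disc_bound\<close> forces
  \<open>Re (c' * cnj c) = \<bar>c'\<bar>\<^sup>2\<close>: the midpoint of the Klein chord of \<open>c'\<close> then lies on the
  Klein chord of \<open>c\<close>, so the two lines meet.\<close>

lemma Re_mult_cnj_le_one_if_disjoint: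
  assumes c: "1 < cmod c" and c': "1 < cmod c'" and disjoint: "hline c \<inter> hline c' = {}"
    and outside: "\<forall>z\<in>hline c'. hrad c \<le> cmod (z - c)"
    and outside': "\<forall>z\<in>hline c. hrad c' \<le> cmod (z - c')"
  shows "Re (c * cnj c') \<le> 1"
proof (rule ccontr)
  define s where "s = Re (c' * cnj c)"
  define q where "q = Im (c' * cnj c)"
  assume "\<not> Re (c * cnj c') \<le> 1"
  then have "1 < s"
    by (simp add: s_def algebra_simps)
  have "(cmod c)\<^sup>2 * (cmod c')\<^sup>2 = s\<^sup>2 + q\<^sup>2"
    using cmod_power2[of "c' * cnj c"] by (simp add: s_def q_def norm_mult power_mult_distrib mult.commute)
  then have q: "q\<^sup>2 = (cmod c)\<^sup>2 * (cmod c')\<^sup>2 - s\<^sup>2"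
    by linarith
  have "Re (c * cnj c') = s" "\<bar>Im (c * cnj c')\<bar> = \<bar>q\<bar>"
    by (simp_all add: s_def q_def algebra_simps)
  then have "s = (cmod c')\<^sup>2"
    using gram_bounds_imp_eq[OF _ _ \<open>1 < s\<close> q] c c'
      hline_outside_disc_bound[OF c c' outside] hline_outside_disc_bound[OF c' c outside']
    unfolding hrad_def s_def[symmetric] q_def[symmetric] by (simp add: one_less_power)
  then have "Re (klein_chord c' 0 * cnj c) = 1"
    using c' unfolding Re_klein_chord_mult_cnj s_def by auto
  then have "klein_to_poincare (klein_chord c' 0) \<in> hline c"
    using klein_to_poincare_in_hline[OF c norm_klein_chord_less[OF c']] hrad_pos[OF c'] by simp
  with klein_to_poincare_klein_chord_in_hline[OF c', of 0] hrad_pos[OF c'] disjoint show False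
    by auto
qed

lemma connected_component_subset_outside:
  assumes c: "1 < cmod c" and X: "hline c \<subseteq> X"
  shows "connected_component_set (unit_disk - X) 0 \<subseteq> {z. hrad c \<le> cmod (z - c)}"
proof
  fix z
  assume z: "z \<in> connected_component_set (unit_disk - X) 0"
  let ?K = "connected_component_set (unit_disk - X) 0"
  show "z \<in> {z. hrad c \<le> cmod (z - c)}"
  proof (rule ccontr)
    assume "z \<notin> {z. hrad c \<le> cmod (z - c)}"
    moreover have "0 \<in> ?K"
      using z by (metis connected_component_in connected_component_refl mem_Collect_eq)
    moreover have "connected ((\<lambda>w. cmod (w - c)) ` ?K)"
      by (intro connected_continuous_image continuous_intros connected_connected_component)
    ultimately have "{cmod (z - c)..cmod (0 - c)} \<subseteq> (\<lambda>w. cmod (w - c)) ` ?K"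
      using z by (intro connected_contains_Icc) (auto simp del: diff_0)
    moreover have "hrad c \<in> {cmod (z - c)..cmod (0 - c)}"
      using \<open>z \<notin> {z. hrad c \<le> cmod (z - c)}\<close> hrad_less_norm[OF c] by auto
    ultimately have "hrad c \<in> (\<lambda>w. cmod (w - c)) ` ?K"
      by blast
    then obtain w where "w \<in> ?K" "cmod (w - c) = hrad c"
      by (metis (no_types, lifting) imageE)
    then show False
      using X connected_component_subset[of "unit_disk - X" 0] unfolding hline_def by blast
  qed
qed

lemma Re_mult_cnj_nonpos_if_vec_angle_ge:
  assumes "pi / 2 \<le> vec_angle u v"
  shows "Re (u * cnj v) \<le> 0"
proof (rule ccontr)
  define t where "t = Re (u * cnj v) / (cmod u * cmod v)"
  assume pos: "\<not> Re (u * cnj v) \<le> 0"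
  then have "u \<noteq> 0" "v \<noteq> 0"
    by auto
  with pos have "0 < t"
    by (simp add: t_def)
  moreover have "t \<le> 1"
    using complex_Re_le_cmod[of "u * cnj v"] \<open>u \<noteq> 0\<close> \<open>v \<noteq> 0\<close> by (simp add: t_def norm_mult)
  ultimately have "vec_angle u v < pi / 2"
    using arccos_less_arccos[of 0 t] by (simp add: vec_angle_def t_def)
  with assms show False
    by simp
qed

lemma Re_mult_cnj_le_one_if_angle:
  assumes c: "1 < cmod c" and c': "1 < cmod c'" and p: "p \<in> hline c \<inter> hline c'"
    and m: "2 \<le> m" and angle: "sector_angle c c' p 0 = pi / real m"
  shows "Re (c * cnj c') \<le> 1"
proof -
  have "side c 0 = 1" "side c' 0 = 1"
    unfolding side_def using hrad_less_norm[OF c] hrad_less_norm[OF c'] by auto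
  then have "vec_angle (p - c) (p - c') = pi - pi / real m"
    using angle unfolding sector_angle_def by simp
  moreover have "pi / real m \<le> pi / 2"
    using m by (intro divide_left_mono) auto
  ultimately have "Re ((p - c) * cnj (p - c')) \<le> 0"
    by (intro Re_mult_cnj_nonpos_if_vec_angle_ge) simp
  moreover have "(cmod p)\<^sup>2 + 1 = 2 * Re (p * cnj c)" "(cmod p)\<^sup>2 + 1 = 2 * Re (p * cnj c')"
    using p norm_diff_eq_hrad_iff[OF c] norm_diff_eq_hrad_iff[OF c'] unfolding hline_def by auto
  moreover have "Re ((p - c) * cnj (p - c'))
                   = (cmod p)\<^sup>2 - Re (p * cnj c') - Re (p * cnj c) + Re (c * cnj c')"
    unfolding cmod_power2 by (simp add: algebra_simps power2_eq_square)
  ultimately show ?thesis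
    by linarith
qed

lemma pair_condition_imp_Re_mult_cnj_le_one:
  assumes c: "1 < cmod c" and c': "1 < cmod c'" and "pair_condition c c' 0"
  shows "Re (c * cnj c') \<le> 1"
  using assms(3) unfolding pair_condition_def
proof (elim disjE conjE exE)
  let ?K = "connected_component_set (unit_disk - (hline c \<union> hline c')) 0"
  assume "hline c \<inter> hline c' = {}" and frontier: "hline c \<union> hline c' \<subseteq> frontier ?K"
  have "frontier ?K \<subseteq> {z. hrad d \<le> cmod (z - d)}" if "1 < cmod d" "hline d \<subseteq> hline c \<union> hline c'" for d
  proof -
    have "closure ?K \<subseteq> {z. hrad d \<le> cmod (z - d)}"
      by (intro closure_minimal connected_component_subset_outside that closed_Collect_le continuous_intros)
    then show ?thesis
      by (auto simp: frontier_def)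
  qed
  with frontier c c' show ?thesis
    by (intro Re_mult_cnj_le_one_if_disjoint[OF c c' \<open>hline c \<inter> hline c' = {}\<close>]) blast+
next
  fix p m
  assume "p \<in> hline c \<inter> hline c'" "2 \<le> m" "sector_angle c c' p 0 = pi / real m"
  then show ?thesis
    by (rule Re_mult_cnj_le_one_if_angle[OF c c'])
qed

lemma one_less_Re_mult_cnj:
  fixes w w' :: complex
  assumes "1 \<le> Re w" "1 \<le> Re w'" "0 \<le> Im w * Im w'" "1 < cmod w" "1 < cmod w'"
  shows "1 < Re (w * cnj w')"
proof (rule ccontr)
  assume "\<not> 1 < Re (w * cnj w')"
  then have "Re w * Re w' + Im w * Im w' \<le> 1"
    by simp
  moreover have "Re w \<le> Re w * Re w'" "Re w' \<le> Re w * Re w'"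
    using assms(1,2) by (simp_all add: mult_le_cancel_left1 mult_le_cancel_right1)
  ultimately have "Re w = 1" "Re w' = 1" "Im w * Im w' = 0"
    using assms(1-3) by linarith+
  then show False
    using assms(4,5) by (auto simp: cmod_def)
qed

lemma no_three_pairwise_Re_mult_cnj_le_one:
  fixes w :: "nat \<Rightarrow> complex"
  assumes "\<forall>i\<in>{1,2,3}. 1 \<le> Re (w i) \<and> 1 < cmod (w i)"
  shows "\<exists>i\<in>{1,2,3}. \<exists>j\<in>{1,2,3}. i \<noteq> j \<and> 1 < Re (w i * cnj (w j))"
proof -
  have "\<exists>i\<in>{1,2,3}. \<exists>j\<in>{1,2,3}. i \<noteq> j \<and> 0 \<le> Im (w i) * Im (w j)"
    by (cases "0 \<le> Im (w 1)"; cases "0 \<le> Im (w 2)"; cases "0 \<le> Im (w 3)")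
      (force simp: zero_le_mult_iff)+
  then show ?thesis
    using assms one_less_Re_mult_cnj by blast
qed

text \<open>Rotating \<open>e\<close> to \<open>1\<close> turns the condition that \<open>e\<close> lies in every closed disc into
  \<open>1 \<le> Re (c i * cnj e)\<close>, while the pairwise products \<open>c i * cnj (c j)\<close> stay unchanged.\<close>

lemma ex_outside_hline_on_circle:
  assumes c: "\<forall>i\<in>{1,2,3::nat}. 1 < cmod (c i)"
    and pairs: "\<forall>i\<in>{1,2,3::nat}. \<forall>j\<in>{1,2,3::nat}. i \<noteq> j \<longrightarrow> Re (c i * cnj (c j)) \<le> 1"
    and e: "cmod e = 1"
  shows "\<exists>i\<in>{1,2,3::nat}. hrad (c i) < cmod (e - c i)"
proof (rule ccontr)
  define w where "w i = c i * cnj e" for i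
  assume "\<not> ?thesis"
  then have "\<forall>i\<in>{1,2,3}. 1 \<le> Re (w i) \<and> 1 < cmod (w i)"
    using c e hrad_less_norm_diff_iff by (auto simp: w_def norm_mult algebra_simps)
  then obtain i j where "i \<in> {1,2,3}" "j \<in> {1,2,3}" "i \<noteq> j" "1 < Re (w i * cnj (w j))"
    using no_three_pairwise_Re_mult_cnj_le_one by blast
  moreover have "w i * cnj (w j) = c i * cnj (c j) * (e * cnj e)"
    by (simp add: w_def algebra_simps)
  moreover have "e * cnj e = 1"
    using e by (simp add: complex_norm_square[symmetric])
  ultimately show False
    using pairs by auto
qed

lemma continuous_on_Max_image:
  fixes f :: "'i \<Rightarrow> 'a::topological_space \<Rightarrow> 'b::linorder_topology"
  assumes "finite I" "I \<noteq> {}" "\<forall>i\<in>I. continuous_on S (f i)"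
  shows "continuous_on S (\<lambda>x. Max ((\<lambda>i. f i x) ` I))"
  using assms by (induction I rule: finite_ne_induct) (auto intro: continuous_on_max)

lemma compact_uniformly_exceeds_one:
  fixes f :: "'i \<Rightarrow> 'a::topological_space \<Rightarrow> real"
  assumes S: "compact S" and I: "finite I" and cont: "\<forall>i\<in>I. continuous_on S (f i)"
    and exceeds: "\<forall>x\<in>S. \<exists>i\<in>I. 1 < f i x"
  shows "\<exists>m>1. \<forall>x\<in>S. \<exists>i\<in>I. m \<le> f i x"
proof (cases "S = {}")
  case False
  define g where "g x = Max ((\<lambda>i. f i x) ` I)" for x
  have "I \<noteq> {}"
    using False exceeds by blast
  then have "continuous_on S g"
    unfolding g_def using I cont by (intro continuous_on_Max_image)
  then obtain x0 where "x0 \<in> S" and min: "\<forall>x\<in>S. g x0 \<le> g x"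
    using continuous_attains_inf[OF S False] by blast
  obtain i0 where "i0 \<in> I" "1 < f i0 x0"
    using exceeds \<open>x0 \<in> S\<close> by blast
  then have "1 < g x0"
    unfolding g_def using I by (meson Max_ge finite_imageI imageI less_le_trans)
  moreover have "\<exists>i\<in>I. g x0 \<le> f i x" if "x \<in> S" for x
  proof -
    have "g x \<in> (\<lambda>i. f i x) ` I"
      unfolding g_def using I \<open>I \<noteq> {}\<close> by (intro Max_in) auto
    then show ?thesis
      using min that by fastforce
  qed
  ultimately show ?thesis
    by blast
qed (use gt_ex in auto)

lemma uniform_escape_from_discs:
  assumes I: "finite I" and c: "\<forall>i\<in>I. 1 < cmod (c i)"
    and escape: "\<forall>x\<in>sphere 0 1. \<exists>i\<in>I. hrad (c i) < cmod (x - c i)"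
  shows "\<exists>m>1. \<forall>x\<in>sphere 0 1. \<exists>i\<in>I. m * hrad (c i) \<le> cmod (x - c i)"
proof -
  have hrad: "\<forall>i\<in>I. 0 < hrad (c i)"
    using c hrad_pos by blast
  then have "\<forall>x\<in>sphere 0 1. \<exists>i\<in>I. 1 < cmod (x - c i) / hrad (c i)"
    using escape by (simp add: less_divide_eq)
  moreover have "\<forall>i\<in>I. continuous_on (sphere 0 1) (\<lambda>x. cmod (x - c i) / hrad (c i))"
    using hrad by (intro ballI continuous_intros) auto
  ultimately obtain m where "1 < m" "\<forall>x\<in>sphere 0 1. \<exists>i\<in>I. m \<le> cmod (x - c i) / hrad (c i)"
    using compact_uniformly_exceeds_one[OF compact_sphere I,
        where f = "\<lambda>i x. cmod (x - c i) / hrad (c i)"] by blast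
  with hrad show ?thesis
    by (metis le_divide_eq)
qed

lemma tau_uniform_contraction:
  assumes c: "\<forall>i\<in>I. 1 < cmod (c i)" and m: "1 < m"
    and escape: "\<forall>x\<in>sphere 0 1. \<exists>i\<in>I. m * hrad (c i) \<le> cmod (x - c i)"
    and x: "cmod x = 1" and xy: "x \<noteq> y"
  shows "\<exists>i\<in>I. cmod (tau (c i) x - tau (c i) y) < (1 + 1 / m) / 2 * cmod (x - y)"
proof -
  have "x \<in> sphere 0 1"
    using x by simp
  then obtain i where i: "i \<in> I" and far: "m * hrad (c i) \<le> cmod (x - c i)"
    using escape by blast
  have "0 < hrad (c i)"
    using c i hrad_pos by blast
  then have out: "hrad (c i) < cmod (x - c i)"
    using far m by (smt (verit) mult_less_cancel_right1)
  moreover have "0 < cmod (x - c i)"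
    using out \<open>0 < hrad (c i)\<close> by linarith
  ultimately have "hrad (c i) / cmod (x - c i) \<le> 1 / m"
    using far m by (simp add: field_simps)
  then have "cmod (tau (c i) x - tau (c i) y) \<le> 1 / m * cmod (x - y)"
    using norm_tau_diff_le[OF _ out] c i by (meson mult_right_mono norm_ge_zero order_trans)
  also have "\<dots> < (1 + 1 / m) / 2 * cmod (x - y)"
    using m xy by (intro mult_strict_right_mono) (auto simp: field_simps)
  finally show ?thesis
    using i by blast
qed

theorem mainTheorem6:
  fixes c :: "nat \<Rightarrow> complex"
  assumes "\<forall>i\<in>{1,2,3::nat}. cmod (c i) > 1"
    and "config_condition c 0"
  shows "\<exists>C::real. C < 1 \<and>
           (\<forall>x y. cmod x = 1 \<longrightarrow> cmod y = 1 \<longrightarrow> x \<noteq> y \<longrightarrow>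
              (\<exists>i\<in>{1,2,3::nat}. cmod (tau (c i) x - tau (c i) y) < C * cmod (x - y)))"
proof -
  note c = assms(1)
  have "\<forall>i\<in>{1,2,3::nat}. \<forall>j\<in>{1,2,3::nat}. i \<noteq> j \<longrightarrow> Re (c i * cnj (c j)) \<le> 1"
    using assms(2) c unfolding config_condition_def
    by (intro ballI impI pair_condition_imp_Re_mult_cnj_le_one) auto
  then have "\<forall>x\<in>sphere 0 1. \<exists>i\<in>{1,2,3}. hrad (c i) < cmod (x - c i)"
    using ex_outside_hline_on_circle[OF c] by simp
  then obtain m where "1 < m"
    and "\<forall>x\<in>sphere 0 1. \<exists>i\<in>{1,2,3::nat}. m * hrad (c i) \<le> cmod (x - c i)"
    using uniform_escape_from_discs[OF _ c] by blast
  moreover have "(1 + 1 / m) / 2 < 1"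
    using \<open>1 < m\<close> by (simp add: field_simps)
  ultimately show ?thesis
    using tau_uniform_contraction[OF c] by blast
qed

end
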